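(* Assume (A1): if $R<\infty$ there is $q_0\in(0,1)$ with $\mathrm{supp}\,Q_0\subseteq[0,q_0R]^d$, and if $R=\infty$ there is $M>0$ with $\mathrm{supp}\,Q_0\subseteq[0,M]^d$. Then the mixing distribution $Q_0$ is identifiable: if $Q_1$ is any probability measure on $\Theta$ with $\int_\Theta\prod_{j=1}^df_{\theta_j}(k_j)\,dQ_0(\boldsymbol\theta)=\int_\Theta\prod_{j=1}^df_{\theta_j}(k_j)\,dQ_1(\boldsymbol\theta)$ for all $\mathbf k=(k_1,\dots,k_d)\in\mathbb N^d$, then $Q_1=Q_0$.
   Context: Let $b_k>0$ for all $k\in\mathbb N=\{0,1,2,\dots\}$, $b(\theta)=\sum_{k\ge0}b_k\theta^k$ with radius of convergence $R\in(0,\infty]$, $\mathcal T=[0,R]$ if $b(R)<\infty$ and $\mathcal T=[0,R)$ if $b(R)=\infty$, $f_\theta(k)=b_k\theta^k/b(\theta)$. Fix $d\ge1$, $\Theta=\mathcal T^d$, and let $Q_0$ be a probability measure on $\Theta$. *)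

theory Defs
  imports "HOL-Probability.Probability"
begin

definition bfun :: "(nat \<Rightarrow> real) \<Rightarrow> real \<Rightarrow> real" where
  "bfun b \<theta> = (\<Sum>k. b k * \<theta> ^ k)"

definition Tset :: "(nat \<Rightarrow> real) \<Rightarrow> real set" where
  "Tset b = {\<theta>. 0 \<le> \<theta> \<and> (ereal \<theta> < conv_radius b \<or>
       (ereal \<theta> = conv_radius b \<and> summable (\<lambda>k. b k * \<theta> ^ k)))}"

definition psd :: "(nat \<Rightarrow> real) \<Rightarrow> real \<Rightarrow> nat \<Rightarrow> real" where
  "psd b \<theta> k = b k * \<theta> ^ k / bfun b \<theta>"

definition Theta :: "(nat \<Rightarrow> real) \<Rightarrow> (real ^ 'd) set" where
  "Theta b = {\<theta>. \<forall>j. \<theta> $ j \<in> Tset b}"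

definition msupport :: "('a::topological_space) measure \<Rightarrow> 'a set" where
  "msupport Q = {x \<in> space Q. \<forall>U. open U \<and> x \<in> U \<longrightarrow> emeasure Q (U \<inter> space Q) > 0}"

end

theory Submission
  imports Defs
begin

text \<open>Since \<open>\<Prod>\<^sub>j f_\<theta>\<^sub>j(k\<^sub>j) = (\<Prod>\<^sub>j b_k\<^sub>j) \<theta>\<^sup>k / \<Prod>\<^sub>j b(\<theta>\<^sub>j)\<close>, the mixture probability of \<open>k\<close> is,
  up to the factor \<open>\<Prod>\<^sub>j b_k\<^sub>j\<close>, the \<open>k\<close>-th moment of the finite measure
  \<open>\<nu>_Q = Q / \<Prod>\<^sub>j b(\<theta>\<^sub>j)\<close>, so \<open>\<nu>_Q0\<close> and \<open>\<nu>_Q1\<close> have the same moments.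
  By (A1), \<open>\<nu>_Q0\<close> lives on a box \<open>[0,c]\<^sup>d\<close>; for \<open>t > c\<close> the bound
  \<open>t\<^sup>n \<nu>_Q1{\<theta>\<^sub>j > t} \<le> \<integral> \<theta>\<^sub>j\<^sup>n d\<nu>_Q1 = \<integral> \<theta>\<^sub>j\<^sup>n d\<nu>_Q0 \<le> c\<^sup>n \<nu>_Q0(\<Theta>)\<close> forces \<open>\<nu>_Q1\<close> onto the
  same box. On the box, polynomials are uniformly dense in the continuous functions
  (Stone-Weierstrass), so the two measures integrate bounded continuous functions alike and
  therefore coincide. As the density \<open>1 / \<Prod>\<^sub>j b(\<theta>\<^sub>j)\<close> is positive on \<open>\<Theta>\<close>, \<open>Q1 = Q0\<close>.\<close>

section \<open>Monomials and the algebra they span\<close>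

definition monomial :: "('d \<Rightarrow> nat) \<Rightarrow> real ^ 'd \<Rightarrow> real" where
  "monomial k x = (\<Prod>j\<in>UNIV. x $ j ^ k j)"

lemma monomial_add: "monomial (\<lambda>j. k j + l j) x = monomial k x * monomial l x"
  by (simp add: monomial_def power_add prod.distrib)

lemma monomial_zero [simp]: "monomial (\<lambda>_. 0) = (\<lambda>_. 1)"
  by (simp add: monomial_def fun_eq_iff)

lemma monomial_single: "monomial (\<lambda>j. if j = i then n else 0) x = x $ i ^ n"
  by (simp add: monomial_def if_distrib cong: if_cong)

lemma continuous_on_monomial: "continuous_on S (monomial k)"
  unfolding monomial_def by (intro continuous_intros)

lemma borel_measurable_monomial [measurable]: "monomial k \<in> borel_measurable borel"
  unfolding monomial_def by measurable

inductive monomial_combination :: "(real ^ 'd \<Rightarrow> real) \<Rightarrow> bool" where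
  zero: "monomial_combination (\<lambda>_. 0)"
| add_monomial: "monomial_combination p \<Longrightarrow> monomial_combination (\<lambda>x. a * monomial k x + p x)"

lemma monomial_combination_const: "monomial_combination (\<lambda>_. c)"
  using monomial_combination.add_monomial[OF monomial_combination.zero, of c "\<lambda>_. 0"] by simp

lemma monomial_combination_add:
  assumes "monomial_combination p" "monomial_combination q"
  shows "monomial_combination (\<lambda>x. p x + q x)"
  using assms(1)
proof induction
  case zero
  then show ?case using assms(2) by simp
next
  case (add_monomial p a k)
  then show ?case using monomial_combination.add_monomial[OF add_monomial.IH, of a k]
    by (simp add: add.assoc)
qed

lemma monomial_combination_mult_monomial:
  assumes "monomial_combination p"
  shows "monomial_combination (\<lambda>x. a * monomial k x * p x)"
  using assms
proof induction
  case zero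
  then show ?case by (simp add: monomial_combination.zero)
next
  case (add_monomial p c l)
  then show ?case
    using monomial_combination.add_monomial[OF add_monomial.IH, of "a * c" "\<lambda>j. k j + l j"]
    by (simp add: monomial_add algebra_simps)
qed

lemma monomial_combination_mult:
  assumes "monomial_combination p" "monomial_combination q"
  shows "monomial_combination (\<lambda>x. p x * q x)"
  using assms(1)
proof induction
  case zero
  then show ?case by (simp add: monomial_combination.zero)
next
  case (add_monomial p a k)
  then show ?case
    using monomial_combination_add[OF monomial_combination_mult_monomial[OF assms(2)]]
    by (simp add: algebra_simps)
qed

lemma continuous_on_monomial_combination:
  "monomial_combination p \<Longrightarrow> continuous_on S p"
  by (induction rule: monomial_combination.induct) 
    (auto intro!: continuous_on_add continuous_on_mult continuous_on_const continuous_on_monomial)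

lemma function_ring_on_monomial_combination:
  "compact K \<Longrightarrow> function_ring_on (Collect monomial_combination) K"
proof unfold_locales
  fix x y :: "real ^ 'd" assume "x \<noteq> y"
  then obtain i where "x $ i \<noteq> y $ i" by (auto simp: vec_eq_iff)
  moreover have "monomial_combination (\<lambda>z. z $ i)"
    using monomial_combination.add_monomial[OF monomial_combination.zero, of 1 "\<lambda>j. if j = i then 1 else 0"]
    by (simp add: monomial_single)
  ultimately show "\<exists>f\<in>Collect monomial_combination. f x \<noteq> f y"
    by (intro bexI[of _ "\<lambda>z. z $ i"]) auto
qed (auto intro: continuous_on_monomial_combination monomial_combination_add
    monomial_combination_mult monomial_combination_const)

section \<open>Finite Borel measures with compact support\<close>

lemma integrable_if_AE_in_compact:
  fixes f :: "'a::metric_space \<Rightarrow> real"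
  assumes "finite_measure M" "sets M = sets borel" "compact K" "AE x in M. x \<in> K"
    and "continuous_on K f" "f \<in> borel_measurable borel"
  shows "integrable M f"
proof -
  interpret finite_measure M by fact
  obtain B where B: "\<And>x. x \<in> K \<Longrightarrow> \<bar>f x\<bar> \<le> B"
    using compact_imp_bounded[OF compact_continuous_image[OF assms(5,3)]]
    by (auto simp: bounded_iff)
  show ?thesis
  proof (rule integrable_const_bound)
    show "AE x in M. norm (f x) \<le> B" using assms(4) by eventually_elim (simp add: B)
    show "f \<in> borel_measurable M" using assms(6) by (simp add: measurable_cong_sets[OF assms(2) refl])
  qed
qed

lemma abs_integral_diff_le:
  fixes f g :: "'a \<Rightarrow> real"
  assumes "finite_measure M" "integrable M f" "integrable M g" "AE x in M. \<bar>f x - g x\<bar> \<le> e"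
  shows "\<bar>(\<integral>x. f x \<partial>M) - (\<integral>x. g x \<partial>M)\<bar> \<le> e * measure M (space M)"
proof -
  interpret finite_measure M by fact
  have "\<bar>(\<integral>x. f x \<partial>M) - (\<integral>x. g x \<partial>M)\<bar> = \<bar>\<integral>x. f x - g x \<partial>M\<bar>"
    using assms(2,3) by simp
  also have "\<dots> \<le> (\<integral>x. \<bar>f x - g x\<bar> \<partial>M)" by (rule integral_abs_bound)
  also have "\<dots> \<le> (\<integral>x. e \<partial>M)"
    using assms(2-4) by (intro integral_mono_AE) simp_all
  finally show ?thesis by (simp add: mult.commute)
qed

lemma integral_monomial_combination_eq:
  fixes M N :: "(real ^ 'd) measure"
  assumes M: "finite_measure M" "sets M = sets borel" "AE x in M. x \<in> K"
    and N: "finite_measure N" "sets N = sets borel" "AE x in N. x \<in> K"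
    and K: "compact K"
    and moments: "\<And>k. (\<integral>x. monomial k x \<partial>M) = (\<integral>x. monomial k x \<partial>N)"
    and "monomial_combination p"
  shows "(\<integral>x. p x \<partial>M) = (\<integral>x. p x \<partial>N)"
  using \<open>monomial_combination p\<close>
proof induction
  case (add_monomial p a k)
  have "continuous_on K p" "continuous_on K (monomial k)"
    using add_monomial.hyps by (simp_all add: continuous_on_monomial_combination continuous_on_monomial)
  moreover have "p \<in> borel_measurable borel"
    using add_monomial.hyps continuous_on_monomial_combination borel_measurable_continuous_onI by blast
  ultimately have "integrable M (monomial k)" "integrable N (monomial k)" "integrable M p" "integrable N p"
    using integrable_if_AE_in_compact[OF M(1,2) K M(3)] integrable_if_AE_in_compact[OF N(1,2) K N(3)]
      borel_measurable_monomial by blast+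
  then show ?case using add_monomial.IH moments[of k] by simp
qed simp

lemma integral_eq_if_moments_eq:
  fixes M N :: "(real ^ 'd) measure" and f :: "real ^ 'd \<Rightarrow> real"
  assumes M: "finite_measure M" "sets M = sets borel" "AE x in M. x \<in> K"
    and N: "finite_measure N" "sets N = sets borel" "AE x in N. x \<in> K"
    and K: "compact K"
    and moments: "\<And>k. (\<integral>x. monomial k x \<partial>M) = (\<integral>x. monomial k x \<partial>N)"
    and f: "continuous_on UNIV f"
  shows "(\<integral>x. f x \<partial>M) = (\<integral>x. f x \<partial>N)"
proof -
  have integrable_M: "integrable M g" and integrable_N: "integrable N g"
    if "continuous_on UNIV g" for g :: "real ^ 'd \<Rightarrow> real"
    using integrable_if_AE_in_compact[OF M(1,2) K M(3)] integrable_if_AE_in_compact[OF N(1,2) K N(3)]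
      continuous_on_subset[OF that subset_UNIV] borel_measurable_continuous_onI[OF that]
    by blast+
  define C where "C = measure M (space M) + measure N (space N) + 1"
  have C: "0 < C" by (simp add: C_def add_nonneg_pos)
  have "\<bar>(\<integral>x. f x \<partial>M) - (\<integral>x. f x \<partial>N)\<bar> \<le> 0 + e" if e: "0 < e" for e
  proof -
    interpret function_ring_on "Collect monomial_combination" K
      using K by (rule function_ring_on_monomial_combination)
    obtain p where p: "monomial_combination p" "\<forall>x\<in>K. \<bar>f x - p x\<bar> < e / C"
      using Stone_Weierstrass_basic[OF continuous_on_subset[OF f] divide_pos_pos[OF e C]] by auto
    have p_cont: "continuous_on UNIV p" using p(1) by (rule continuous_on_monomial_combination)
    have close: "AE x in Q. \<bar>f x - p x\<bar> \<le> e / C" if "AE x in Q. x \<in> K" for Q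
      using that by eventually_elim (use p(2) in force)
    have "\<bar>(\<integral>x. f x \<partial>M) - (\<integral>x. f x \<partial>N)\<bar>
        \<le> e / C * measure M (space M) + e / C * measure N (space N)"
      using abs_integral_diff_le[OF M(1) integrable_M[OF f] integrable_M[OF p_cont] close[OF M(3)]]
        abs_integral_diff_le[OF N(1) integrable_N[OF f] integrable_N[OF p_cont] close[OF N(3)]]
        integral_monomial_combination_eq[OF M N K moments p(1)]
      by linarith
    also have "\<dots> = e / C * (C - 1)" by (simp add: C_def distrib_left)
    also have "\<dots> \<le> e" using e C by (simp add: field_simps)
    finally show ?thesis by simp
  qed
  then have "\<bar>(\<integral>x. f x \<partial>M) - (\<integral>x. f x \<partial>N)\<bar> \<le> 0" by (rule field_le_epsilon)
  then show ?thesis by simp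
qed

lemma tendsto_infdist_cutoff_indicator:
  fixes C :: "'a::metric_space set"
  assumes "closed C" "C \<noteq> {}"
  shows "(\<lambda>n. max 0 (1 - real n * infdist x C)) \<longlonglongrightarrow> indicator C x"
proof (cases "x \<in> C")
  case True
  then show ?thesis by simp
next
  case False
  then have d: "0 < infdist x C"
    using in_closed_iff_infdist_zero[OF assms] infdist_nonneg[of x C] by (simp add: order_le_less)
  obtain N :: nat where N: "1 / infdist x C < real N" using reals_Archimedean2 by blast
  have "max 0 (1 - real n * infdist x C) = 0" if "N \<le> n" for n
  proof -
    have "1 < real N * infdist x C" using N d by (simp add: field_simps)
    also have "\<dots> \<le> real n * infdist x C" using that d by (simp add: mult_right_mono)
    finally show ?thesis by simp
  qed
  then show ?thesis
    using False by (simp add: tendsto_eventually eventually_sequentiallyI[of N])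
qed

lemma integral_infdist_cutoff_tendsto_measure:
  fixes Q :: "'a::metric_space measure"
  assumes "finite_measure Q" "sets Q = sets borel" "closed C" "C \<noteq> {}"
  shows "(\<lambda>n. \<integral>x. max 0 (1 - real n * infdist x C) \<partial>Q) \<longlonglongrightarrow> measure Q C"
proof -
  interpret finite_measure Q by fact
  have [measurable_cong]: "sets Q = sets borel" by fact
  have [measurable]: "C \<in> sets borel" using assms(3) by (rule borel_closed)
  have "(\<lambda>x. max 0 (1 - real n * infdist x C)) \<in> borel_measurable borel" for n
    by (intro borel_measurable_continuous_onI continuous_intros)
  moreover have "\<bar>max 0 (1 - real n * infdist x C)\<bar> \<le> 1" for n x
    using infdist_nonneg[of x C] by simp
  ultimately have "(\<lambda>n. \<integral>x. max 0 (1 - real n * infdist x C) \<partial>Q) \<longlonglongrightarrow> (\<integral>x. indicator C x \<partial>Q)"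
    using tendsto_infdist_cutoff_indicator[OF assms(3,4)]
    by (intro integral_dominated_convergence[where w="\<lambda>_. 1"]) auto
  then show ?thesis by simp
qed

lemma measure_eq_if_integral_continuous_eq:
  fixes M N :: "'a::metric_space measure"
  assumes M: "finite_measure M" "sets M = sets borel"
    and N: "finite_measure N" "sets N = sets borel"
    and integral_eq: "\<And>f :: 'a \<Rightarrow> real. continuous_on UNIV f \<Longrightarrow> bounded (range f) \<Longrightarrow>
      (\<integral>x. f x \<partial>M) = (\<integral>x. f x \<partial>N)"
  shows "M = N"
proof (rule measure_eqI_generator_eq[where E="Collect closed" and \<Omega>=UNIV and A="\<lambda>_. UNIV"])
  show "Int_stable (Collect closed)" by (auto simp: Int_stable_def)
  show "Collect closed \<subseteq> Pow UNIV" "range (\<lambda>_. UNIV) \<subseteq> Collect closed" "(\<Union>i. UNIV) = UNIV"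
    by auto
  show "sets M = sigma_sets UNIV (Collect closed)" "sets N = sigma_sets UNIV (Collect closed)"
    using M(2) N(2) by (simp_all add: borel_eq_closed)
  show "emeasure M UNIV \<noteq> \<infinity>"
    using finite_measure.emeasure_finite[OF M(1), of UNIV] M(2) sets.top[of M] by simp
  fix C :: "'a set" assume "C \<in> Collect closed"
  then have C: "closed C" by simp
  show "emeasure M C = emeasure N C"
  proof (cases "C = {}")
    case False
    define f where "f n x = max 0 (1 - real n * infdist x C)" for n :: nat and x :: 'a
    have "continuous_on UNIV (f n)" for n
      unfolding f_def by (intro continuous_intros)
    moreover have "bounded (range (f n))" for n
      using infdist_nonneg[of _ C] by (auto simp: f_def bounded_iff intro: exI[of _ 1])
    ultimately have "(\<lambda>n. \<integral>x. f n x \<partial>M) \<longlonglongrightarrow> measure N C"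
      using integral_infdist_cutoff_tendsto_measure[OF N C False] integral_eq by (simp add: f_def)
    then have "measure M C = measure N C"
      using integral_infdist_cutoff_tendsto_measure[OF M C False] LIMSEQ_unique
      unfolding f_def by blast
    then show ?thesis
      by (simp add: finite_measure.emeasure_eq_measure[OF M(1)] finite_measure.emeasure_eq_measure[OF N(1)])
  qed simp
qed

lemma measure_eq_if_moments_eq:
  fixes M N :: "(real ^ 'd) measure"
  assumes "finite_measure M" "sets M = sets borel" "AE x in M. x \<in> K"
    and "finite_measure N" "sets N = sets borel" "AE x in N. x \<in> K"
    and "compact K"
    and "\<And>k. (\<integral>x. monomial k x \<partial>M) = (\<integral>x. monomial k x \<partial>N)"
  shows "M = N"
proof (rule measure_eq_if_integral_continuous_eq[OF assms(1,2,4,5)])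
  show "(\<integral>x. f x \<partial>M) = (\<integral>x. f x \<partial>N)" if "continuous_on UNIV f" for f :: "real ^ 'd \<Rightarrow> real"
    using integral_eq_if_moments_eq[OF assms that] .
qed

lemma AE_le_if_moments_bounded:
  fixes f :: "'a \<Rightarrow> real"
  assumes N: "finite_measure N" and f [measurable]: "f \<in> borel_measurable N"
    and f_nonneg: "AE x in N. 0 \<le> f x"
    and integrable: "\<And>n. integrable N (\<lambda>x. f x ^ n)"
    and moments: "\<And>n. (\<integral>x. f x ^ n \<partial>N) \<le> C * c ^ n" and "0 \<le> c"
  shows "AE x in N. f x \<le> c"
proof -
  interpret finite_measure N by fact
  have tail: "AE x in N. f x \<le> t" if "c < t" for t
  proof -
    define A where "A = {x \<in> space N. t < f x}"
    have A_sets [measurable]: "A \<in> sets N" unfolding A_def by measurable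
    have "t ^ n * measure N A \<le> C * c ^ n" for n
    proof -
      have "t ^ n * measure N A = (\<integral>x. t ^ n * indicator A x \<partial>N)" by simp
      also have "\<dots> \<le> (\<integral>x. f x ^ n \<partial>N)"
      proof (rule integral_mono_AE)
        show "AE x in N. t ^ n * indicator A x \<le> f x ^ n"
          using f_nonneg
        proof eventually_elim
          case (elim x)
          show ?case
          proof (cases "x \<in> A")
            case True
            then have "t ^ n \<le> f x ^ n" using that \<open>0 \<le> c\<close> by (intro power_mono) (auto simp: A_def)
            then show ?thesis using True by simp
          qed (use elim in simp)
        qed
      qed (simp_all add: integrable less_top[symmetric])
      also have "\<dots> \<le> C * c ^ n" by (rule moments)
      finally show ?thesis .
    qed
    then have bound: "measure N A \<le> C * (c / t) ^ n" for n
      using that \<open>0 \<le> c\<close> by (simp add: field_simps)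
    have "(\<lambda>n. C * (c / t) ^ n) \<longlonglongrightarrow> 0"
      using tendsto_mult_left[OF LIMSEQ_power_zero, of "c / t" C] that \<open>0 \<le> c\<close> by simp
    then have "measure N A \<le> 0"
      using LIMSEQ_le_const[of _ 0 "measure N A"] bound by blast
    then have "A \<in> null_sets N"
      using A_sets by (simp add: null_sets_def emeasure_eq_measure antisym)
    then show ?thesis by (rule AE_I') (auto simp: A_def)
  qed
  have "AE x in N. \<forall>m::nat. f x \<le> c + 1 / Suc m"
    by (subst AE_all_countable) (auto intro!: tail)
  then show ?thesis
  proof eventually_elim
    case (elim x)
    show ?case
    proof (rule field_le_epsilon)
      fix e :: real assume "0 < e"
      then obtain m :: nat where "1 / Suc m < e" by (rule nat_approx_posE)
      then show "f x \<le> c + e" using elim[rule_format, of m] by simp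
    qed
  qed
qed

lemma AE_in_box_if_moments_eq:
  fixes M N :: "(real ^ 'd) measure"
  assumes M: "finite_measure M" "sets M = sets borel" "AE x in M. x \<in> cbox 0 (\<chi> _. c)"
    and N: "finite_measure N" "sets N = sets borel" "AE x in N. \<forall>j. 0 \<le> x $ j"
      "\<And>k. integrable N (monomial k)"
    and moments: "\<And>k. (\<integral>x. monomial k x \<partial>N) = (\<integral>x. monomial k x \<partial>M)"
    and "0 \<le> c"
  shows "AE x in N. x \<in> cbox 0 (\<chi> _. c)"
proof -
  have "AE x in N. x $ j \<le> c" for j
  proof (rule AE_le_if_moments_bounded[OF N(1), where C="measure M (space M)"])
    define e where "e n = (\<lambda>i. if i = j then n else 0 :: nat)" for n
    have power_eq: "x $ j ^ n = monomial (e n) x" for x n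
      by (simp add: e_def monomial_single)
    show "(\<lambda>x. x $ j) \<in> borel_measurable N"
      by (simp add: measurable_cong_sets[OF N(2) refl])
    show "AE x in N. 0 \<le> x $ j" using N(3) by eventually_elim simp
    show "integrable N (\<lambda>x. x $ j ^ n)" for n using N(4) by (simp add: power_eq)
    show "(\<integral>x. x $ j ^ n \<partial>N) \<le> measure M (space M) * c ^ n" for n
    proof -
      interpret finite_measure M by fact
      have "(\<integral>x. x $ j ^ n \<partial>N) = (\<integral>x. monomial (e n) x \<partial>M)"
        by (simp add: power_eq moments)
      also have "\<dots> \<le> (\<integral>x. c ^ n \<partial>M)"
      proof (rule integral_mono_AE)
        show "integrable M (monomial (e n))"
          by (rule integrable_if_AE_in_compact[OF M(1,2) compact_cbox M(3)])
            (simp_all add: continuous_on_monomial)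
        show "AE x in M. monomial (e n) x \<le> c ^ n"
          using M(3) by eventually_elim (auto simp: power_eq[symmetric] mem_box_cart intro: power_mono)
      qed simp
      finally show ?thesis by (simp add: mult.commute)
    qed
  qed fact
  then have "AE x in N. \<forall>j. x $ j \<le> c" by (subst AE_all_countable) simp
  with N(3) show ?thesis by eventually_elim (simp add: mem_box_cart)
qed

section \<open>Measures on a Borel subset\<close>

lemma space_eq_if_sets_restrict_space_borel:
  assumes "sets Q = sets (restrict_space borel S)" shows "space Q = S"
  using sets_eq_imp_space_eq[OF assms] by (simp add: space_restrict_space)

lemma measurable_if_sets_restrict_space_borel:
  assumes "sets Q = sets (restrict_space borel S)" "f \<in> measurable borel N"
  shows "f \<in> measurable Q N"
  by (subst measurable_cong_sets[OF assms(1) refl]) (rule measurable_restrict_space1[OF assms(2)])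

lemma AE_in_msupport:
  fixes Q :: "'a::second_countable_topology measure"
  assumes sets_Q: "sets Q = sets (restrict_space borel S)"
  shows "AE x in Q. x \<in> msupport Q"
proof -
  have space_Q: "space Q = S" using sets_Q by (rule space_eq_if_sets_restrict_space_borel)
  define F where "F = {U. open U \<and> emeasure Q (U \<inter> S) = 0}"
  have "\<And>U. U \<in> F \<Longrightarrow> open U" by (simp add: F_def)
  then obtain F' where F': "F' \<subseteq> F" "countable F'" "\<Union>F' = \<Union>F"
    using Lindelof by metis
  have "(\<Union>U\<in>F'. U \<inter> S) \<in> null_sets Q"
  proof (rule null_sets_UN')
    fix U assume "U \<in> F'"
    then have U: "open U" "emeasure Q (U \<inter> S) = 0" using F' by (auto simp: F_def)
    have "U \<inter> S \<in> sets Q" using U(1) sets_Q by (auto simp: sets_restrict_space Int_commute)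
    then show "U \<inter> S \<in> null_sets Q" using U(2) by (simp add: null_sets_def)
  qed fact
  then show ?thesis
  proof (rule AE_I')
    show "{x \<in> space Q. x \<notin> msupport Q} \<subseteq> (\<Union>U\<in>F'. U \<inter> S)"
    proof
      fix x assume x: "x \<in> {x \<in> space Q. x \<notin> msupport Q}"
      then obtain U where "open U" "x \<in> U" "emeasure Q (U \<inter> S) = 0"
        using space_Q by (auto simp: msupport_def)
      then show "x \<in> (\<Union>U\<in>F'. U \<inter> S)" using x F'(3) space_Q by (auto simp: F_def)
    qed
  qed
qed

lemma measure_eq_if_density_eq:
  fixes g :: "'a \<Rightarrow> real"
  assumes sets_eq: "sets N = sets M" and g [measurable]: "g \<in> borel_measurable M"
    and "AE x in M. 0 < g x" "AE x in N. 0 < g x"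
    and density_eq: "density M (\<lambda>x. ennreal (g x)) = density N (\<lambda>x. ennreal (g x))"
  shows "M = N"
proof -
  have cancel: "density (density L (\<lambda>x. ennreal (g x))) (\<lambda>x. ennreal (1 / g x)) = L"
    if "sets L = sets M" "AE x in L. 0 < g x" for L
  proof -
    have [measurable]: "g \<in> borel_measurable L" using g by (simp add: measurable_cong_sets[OF that(1) refl])
    have "density (density L (\<lambda>x. ennreal (g x))) (\<lambda>x. ennreal (1 / g x))
        = density L (\<lambda>x. ennreal (g x) * ennreal (1 / g x))"
      by (rule density_density_eq) simp_all
    also have "\<dots> = density L (\<lambda>_. 1)"
      by (rule density_cong) (use that(2) in \<open>auto elim!: eventually_mono simp: ennreal_mult[symmetric]\<close>)
    finally show ?thesis by (simp add: density_1)
  qed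
  have "M = density (density M (\<lambda>x. ennreal (g x))) (\<lambda>x. ennreal (1 / g x))"
    using cancel[of M] assms(3) by simp
  also have "\<dots> = N"
    unfolding density_eq using cancel[of N] assms(4) sets_eq by simp
  finally show ?thesis .
qed

lemma measure_eq_if_distr_borel_eq:
  assumes sets_M: "sets M = sets (restrict_space borel S)"
    and sets_N: "sets N = sets (restrict_space borel S)"
    and distr_eq: "distr M borel id = distr N borel id"
  shows "M = N"
proof (rule measure_eqI)
  show "sets M = sets N" using sets_M sets_N by simp
  fix A assume "A \<in> sets M"
  then obtain B where B: "B \<in> sets borel" "A = S \<inter> B"
    using sets_M by (auto simp: sets_restrict_space)
  have "emeasure L A = emeasure (distr L borel id) B" if "sets L = sets (restrict_space borel S)" for L
    using B space_eq_if_sets_restrict_space_borel[OF that]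
      measurable_if_sets_restrict_space_borel[OF that measurable_id]
    by (simp add: emeasure_distr Int_commute)
  then show "emeasure M A = emeasure N A" using sets_M sets_N distr_eq by metis
qed

section \<open>Power series mixtures\<close>

lemma Tset_summable: "t \<in> Tset b \<Longrightarrow> summable (\<lambda>k. b k * t ^ k)"
  by (auto simp: Tset_def intro: summable_in_conv_radius)

lemma Tset_nonneg: "t \<in> Tset b \<Longrightarrow> 0 \<le> t"
  by (simp add: Tset_def)

lemma power_term_le_bfun:
  assumes "\<And>k. 0 \<le> b k" "t \<in> Tset b"
  shows "b k * t ^ k \<le> bfun b t"
  unfolding bfun_def
  using sum_le_suminf[OF Tset_summable[OF assms(2)], of "{k}"] assms Tset_nonneg[OF assms(2)]
  by simp

lemma borel_measurable_bfun [measurable]: "bfun b \<in> borel_measurable borel"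
proof -
  have "bfun b = (\<lambda>t. lim (\<lambda>n. \<Sum>i<n. b i * t ^ i))"
    by (auto simp: fun_eq_iff bfun_def suminf_def sums_def lim_def)
  then show ?thesis by simp
qed

lemma bfun_pos:
  assumes "\<And>k. 0 < b k" "t \<in> Tset b" shows "0 < bfun b t"
proof -
  have "b 0 \<le> bfun b t" using power_term_le_bfun[of b t 0] assms by (simp add: less_imp_le)
  then show ?thesis using assms(1)[of 0] by simp
qed

lemma psd_nonneg:
  assumes "\<And>k. 0 < b k" "t \<in> Tset b" shows "0 \<le> psd b t k"
  using bfun_pos[OF assms] assms(1)[of k] Tset_nonneg[OF assms(2)] by (simp add: psd_def)

lemma psd_le_1:
  assumes "\<And>k. 0 < b k" "t \<in> Tset b" shows "psd b t k \<le> 1"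
  using bfun_pos[OF assms] power_term_le_bfun[of b t k] assms by (simp add: psd_def less_imp_le)

definition bweight :: "(nat \<Rightarrow> real) \<Rightarrow> real ^ 'd \<Rightarrow> real" where
  "bweight b \<theta> = (\<Prod>j\<in>UNIV. 1 / bfun b (\<theta> $ j))"

lemma borel_measurable_bweight [measurable]: "bweight b \<in> borel_measurable borel"
  unfolding bweight_def by measurable

lemma bweight_pos:
  assumes "\<And>k. 0 < b k" "\<theta> \<in> Theta b" shows "0 < bweight b \<theta>"
  using bfun_pos[OF assms(1)] assms(2) by (simp add: bweight_def Theta_def prod_pos)

lemma bweight_monomial_eq:
  assumes "\<And>k. 0 < b k"
  shows "bweight b \<theta> * monomial k \<theta> = (\<Prod>j\<in>UNIV. psd b (\<theta> $ j) (k j)) / (\<Prod>j\<in>UNIV. b (k j))"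
proof -
  have "(\<Prod>j\<in>UNIV. psd b (\<theta> $ j) (k j)) = (\<Prod>j\<in>UNIV. b (k j)) * (bweight b \<theta> * monomial k \<theta>)"
    unfolding psd_def bweight_def monomial_def prod.distrib[symmetric] by simp
  then show ?thesis using assms by (simp add: less_imp_neq[OF assms, symmetric])
qed

lemma bweight_monomial_bounds:
  assumes "\<And>k. 0 < b k" "\<theta> \<in> Theta b"
  shows "0 \<le> bweight b \<theta> * monomial k \<theta>" "bweight b \<theta> * monomial k \<theta> \<le> 1 / (\<Prod>j\<in>UNIV. b (k j))"
proof -
  have "\<theta> $ j \<in> Tset b" for j using assms(2) by (simp add: Theta_def)
  then have "0 \<le> (\<Prod>j\<in>UNIV. psd b (\<theta> $ j) (k j))" "(\<Prod>j\<in>UNIV. psd b (\<theta> $ j) (k j)) \<le> 1"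
    using psd_nonneg[of b, OF assms(1)] psd_le_1[of b, OF assms(1)] by (auto intro: prod_nonneg prod_le_1)
  moreover have "0 < (\<Prod>j\<in>UNIV. b (k j))" using assms(1) by (simp add: prod_pos)
  ultimately show "0 \<le> bweight b \<theta> * monomial k \<theta>" "bweight b \<theta> * monomial k \<theta> \<le> 1 / (\<Prod>j\<in>UNIV. b (k j))"
    by (simp_all add: bweight_monomial_eq[OF assms(1)] divide_right_mono)
qed

text \<open>The measure \<open>\<nu>_Q\<close> of the proof idea, moved from the subspace \<open>\<Theta>\<close> to the Borel sets
  of the whole space, where the results on compactly supported measures apply.\<close>
definition moment_measure :: "(nat \<Rightarrow> real) \<Rightarrow> (real ^ 'd) measure \<Rightarrow> (real ^ 'd) measure" where
  "moment_measure b Q = distr (density Q (\<lambda>\<theta>. ennreal (bweight b \<theta>))) borel id"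

lemma sets_moment_measure [simp]: "sets (moment_measure b Q) = sets borel"
  by (simp add: moment_measure_def)

lemma AE_moment_measure:
  assumes "sets Q = sets (restrict_space borel S)" "A \<in> sets borel" "AE \<theta> in Q. \<theta> \<in> A"
  shows "AE x in moment_measure b Q. x \<in> A"
  unfolding moment_measure_def
  using assms measurable_if_sets_restrict_space_borel[OF assms(1) measurable_id]
  by (subst AE_distr_iff) (auto simp: AE_density elim: eventually_mono)

lemma AE_nonneg_moment_measure:
  assumes "sets Q = sets (restrict_space borel (Theta b))"
  shows "AE x in moment_measure b Q. \<forall>j. 0 \<le> x $ j"
proof -
  have "{x :: real ^ 'd. \<forall>j. 0 \<le> x $ j} \<in> sets borel" by measurable
  moreover have "AE \<theta> in Q. \<theta> \<in> {x. \<forall>j. 0 \<le> x $ j}"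
    using space_eq_if_sets_restrict_space_borel[OF assms]
    by (intro AE_I2) (auto simp: Theta_def Tset_def)
  ultimately have "AE x in moment_measure b Q. x \<in> {x. \<forall>j. 0 \<le> x $ j}"
    by (rule AE_moment_measure[OF assms])
  then show ?thesis by simp
qed

lemma integral_moment_measure:
  assumes "\<And>k. 0 < b k" "sets Q = sets (restrict_space borel (Theta b))"
    and "f \<in> borel_measurable borel"
  shows "(\<integral>x. f x \<partial>moment_measure b Q) = (\<integral>\<theta>. bweight b \<theta> * f \<theta> \<partial>Q)"
    and "integrable (moment_measure b Q) f \<longleftrightarrow> integrable Q (\<lambda>\<theta>. bweight b \<theta> * f \<theta>)"
proof -
  have [measurable]: "f \<in> borel_measurable borel" "id \<in> measurable Q borel"
    "bweight b \<in> borel_measurable Q" "f \<in> borel_measurable Q"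
    using assms(3) by (simp_all add: measurable_if_sets_restrict_space_borel[OF assms(2)])
  have nonneg: "AE \<theta> in Q. 0 \<le> bweight b \<theta>"
    using bweight_pos[of b, OF assms(1)] space_eq_if_sets_restrict_space_borel[OF assms(2)]
    by (intro AE_I2) (force intro: less_imp_le)
  show "(\<integral>x. f x \<partial>moment_measure b Q) = (\<integral>\<theta>. bweight b \<theta> * f \<theta> \<partial>Q)"
    unfolding moment_measure_def using nonneg by (simp add: integral_distr integral_density)
  show "integrable (moment_measure b Q) f \<longleftrightarrow> integrable Q (\<lambda>\<theta>. bweight b \<theta> * f \<theta>)"
    unfolding moment_measure_def using nonneg by (simp add: integrable_distr_eq integrable_density)
qed

lemma integral_monomial_moment_measure:
  assumes "\<And>k. 0 < b k" "sets Q = sets (restrict_space borel (Theta b))"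
  shows "(\<integral>x. monomial k x \<partial>moment_measure b Q)
    = (\<integral>\<theta>. (\<Prod>j\<in>UNIV. psd b (\<theta> $ j) (k j)) \<partial>Q) / (\<Prod>j\<in>UNIV. b (k j))"
  by (simp add: integral_moment_measure[OF assms] bweight_monomial_eq[OF assms(1)])

lemma integrable_monomial_moment_measure:
  assumes b_pos: "\<And>k. 0 < b k" and Q: "finite_measure Q" "sets Q = sets (restrict_space borel (Theta b))"
  shows "integrable (moment_measure b Q) (monomial k)"
proof -
  interpret finite_measure Q by fact
  have "integrable Q (\<lambda>\<theta>. bweight b \<theta> * monomial k \<theta>)"
  proof (rule integrable_const_bound[where B="1 / (\<Prod>j\<in>UNIV. b (k j))"])
    show "AE \<theta> in Q. norm (bweight b \<theta> * monomial k \<theta>) \<le> 1 / (\<Prod>j\<in>UNIV. b (k j))"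
      using bweight_monomial_bounds[of b, OF b_pos] space_eq_if_sets_restrict_space_borel[OF Q(2)]
      by (intro AE_I2) force
    show "(\<lambda>\<theta>. bweight b \<theta> * monomial k \<theta>) \<in> borel_measurable Q"
      using Q(2) by (rule measurable_if_sets_restrict_space_borel) simp
  qed
  then show ?thesis by (simp add: integral_moment_measure[OF b_pos Q(2)])
qed

lemma finite_measure_moment_measure:
  assumes "\<And>k. 0 < b k" "finite_measure Q" "sets Q = sets (restrict_space borel (Theta b))"
  shows "finite_measure (moment_measure b Q)"
proof
  have "integrable (moment_measure b Q) (\<lambda>_. 1 :: real)"
    using integrable_monomial_moment_measure[OF assms, of "\<lambda>_. 0"] by simp
  then show "emeasure (moment_measure b Q) (space (moment_measure b Q)) \<noteq> \<infinity>"
    by (simp add: integrable_iff_bounded)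
qed

lemma moment_measure_eqD:
  assumes b_pos: "\<And>k. 0 < b k"
    and sets_Q0: "sets Q0 = sets (restrict_space borel (Theta b))"
    and sets_Q1: "sets Q1 = sets (restrict_space borel (Theta b))"
    and "moment_measure b Q0 = moment_measure b Q1"
  shows "Q0 = Q1"
proof (rule measure_eq_if_density_eq)
  have "AE \<theta> in Q. 0 < bweight b \<theta>"
    if "sets Q = sets (restrict_space borel (Theta b))" for Q :: "(real ^ 'd) measure"
    using bweight_pos[of b, OF b_pos] space_eq_if_sets_restrict_space_borel[OF that]
    by (intro AE_I2) auto
  then show "AE \<theta> in Q0. 0 < bweight b \<theta>" "AE \<theta> in Q1. 0 < bweight b \<theta>"
    using sets_Q0 sets_Q1 by blast+
  show "sets Q1 = sets Q0" using sets_Q0 sets_Q1 by simp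
  show "bweight b \<in> borel_measurable Q0"
    using sets_Q0 by (rule measurable_if_sets_restrict_space_borel) simp
  show "density Q0 (\<lambda>\<theta>. ennreal (bweight b \<theta>)) = density Q1 (\<lambda>\<theta>. ennreal (bweight b \<theta>))"
  proof (rule measure_eq_if_distr_borel_eq[where S="Theta b"])
    show "sets (density Q0 (\<lambda>\<theta>. ennreal (bweight b \<theta>))) = sets (restrict_space borel (Theta b))"
      "sets (density Q1 (\<lambda>\<theta>. ennreal (bweight b \<theta>))) = sets (restrict_space borel (Theta b))"
      using sets_Q0 sets_Q1 by simp_all
    show "distr (density Q0 (\<lambda>\<theta>. ennreal (bweight b \<theta>))) borel id
        = distr (density Q1 (\<lambda>\<theta>. ennreal (bweight b \<theta>))) borel id"
      using assms(4) unfolding moment_measure_def .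
  qed
qed

lemma Collect_nonneg_le_eq_cbox:
  "{\<theta> :: real ^ 'd. \<forall>j. 0 \<le> \<theta> $ j \<and> \<theta> $ j \<le> c} = cbox 0 (\<chi> _. c)"
  by (auto simp: mem_box_cart)

lemma support_in_box:
  assumes R_pos: "conv_radius b > 0"
    and A1_fin: "conv_radius b < \<infinity> \<Longrightarrow>
       \<exists>q0. 0 < q0 \<and> q0 < 1 \<and> S \<subseteq> {\<theta>. \<forall>j. 0 \<le> \<theta> $ j \<and> \<theta> $ j \<le> q0 * real_of_ereal (conv_radius b)}"
    and A1_inf: "conv_radius b = \<infinity> \<Longrightarrow> \<exists>M. 0 < M \<and> S \<subseteq> {\<theta>. \<forall>j. 0 \<le> \<theta> $ j \<and> \<theta> $ j \<le> M}"
  obtains c where "0 \<le> c" "S \<subseteq> cbox 0 (\<chi> _. c)"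
proof (cases "conv_radius b")
  case (real R)
  then obtain q0 where "0 < q0" "S \<subseteq> {\<theta>. \<forall>j. 0 \<le> \<theta> $ j \<and> \<theta> $ j \<le> q0 * R}"
    using A1_fin by auto
  moreover have "0 < R" using R_pos real by simp
  ultimately show ?thesis using that[of "q0 * R"] by (simp add: Collect_nonneg_le_eq_cbox)
next
  case PInf
  then obtain M where "0 < M" "S \<subseteq> {\<theta>. \<forall>j. 0 \<le> \<theta> $ j \<and> \<theta> $ j \<le> M}"
    using A1_inf by auto
  then show ?thesis using that[of M] by (simp add: Collect_nonneg_le_eq_cbox)
next
  case MInf
  then show ?thesis using R_pos by simp
qed

theorem proposition6:
  fixes b :: "nat \<Rightarrow> real"
    and Q0 Q1 :: "(real ^ 'd) measure"
  assumes b_pos: "\<And>k. b k > 0"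
    and R_pos: "conv_radius b > 0"
    and Q0_prob: "prob_space Q0"
    and Q0_sets: "sets Q0 = sets (restrict_space borel (Theta b))"
    and A1_fin: "conv_radius b < \<infinity> \<Longrightarrow>
       \<exists>q0. 0 < q0 \<and> q0 < 1 \<and>
         msupport Q0 \<subseteq> {\<theta>. \<forall>j. 0 \<le> \<theta> $ j \<and> \<theta> $ j \<le> q0 * real_of_ereal (conv_radius b)}"
    and A1_inf: "conv_radius b = \<infinity> \<Longrightarrow>
       \<exists>M. 0 < M \<and> msupport Q0 \<subseteq> {\<theta>. \<forall>j. 0 \<le> \<theta> $ j \<and> \<theta> $ j \<le> M}"
    and Q1_prob: "prob_space Q1"
    and Q1_sets: "sets Q1 = sets (restrict_space borel (Theta b))"
    and eq: "\<And>k :: 'd \<Rightarrow> nat.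
       (\<integral>\<theta>. (\<Prod>j\<in>UNIV. psd b (\<theta> $ j) (k j)) \<partial>Q0) =
       (\<integral>\<theta>. (\<Prod>j\<in>UNIV. psd b (\<theta> $ j) (k j)) \<partial>Q1)"
  shows "Q1 = Q0"
proof -
  obtain c where "0 \<le> c" and supp: "msupport Q0 \<subseteq> cbox 0 (\<chi> _. c)"
    using support_in_box[OF R_pos A1_fin A1_inf] .
  have Q0_fin: "finite_measure Q0" and Q1_fin: "finite_measure Q1"
    using Q0_prob Q1_prob by (simp_all add: prob_space_def)
  define \<nu>0 where "\<nu>0 = moment_measure b Q0"
  define \<nu>1 where "\<nu>1 = moment_measure b Q1"
  note \<nu>0 = finite_measure_moment_measure[OF b_pos Q0_fin Q0_sets, folded \<nu>0_def]
    sets_moment_measure[of b Q0, folded \<nu>0_def]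
  note \<nu>1 = finite_measure_moment_measure[OF b_pos Q1_fin Q1_sets, folded \<nu>1_def]
    sets_moment_measure[of b Q1, folded \<nu>1_def]
    AE_nonneg_moment_measure[OF Q1_sets, folded \<nu>1_def]
    integrable_monomial_moment_measure[OF b_pos Q1_fin Q1_sets, folded \<nu>1_def]
  have "AE \<theta> in Q0. \<theta> \<in> cbox 0 (\<chi> _. c)"
    using AE_in_msupport[OF Q0_sets] supp by (auto elim: eventually_mono)
  then have \<nu>0_box: "AE x in \<nu>0. x \<in> cbox 0 (\<chi> _. c)"
    unfolding \<nu>0_def by (rule AE_moment_measure[OF Q0_sets, rotated]) simp
  have moments: "(\<integral>x. monomial k x \<partial>\<nu>1) = (\<integral>x. monomial k x \<partial>\<nu>0)" for k
    unfolding \<nu>0_def \<nu>1_def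
    by (simp add: integral_monomial_moment_measure[OF b_pos Q0_sets]
        integral_monomial_moment_measure[OF b_pos Q1_sets] eq)
  have \<nu>1_box: "AE x in \<nu>1. x \<in> cbox 0 (\<chi> _. c)"
    using \<nu>0 \<nu>0_box \<nu>1 moments \<open>0 \<le> c\<close> by (rule AE_in_box_if_moments_eq)
  have "\<nu>0 = \<nu>1"
    using \<nu>0 \<nu>0_box \<nu>1(1,2) \<nu>1_box compact_cbox moments[symmetric] by (rule measure_eq_if_moments_eq)
  then show "Q1 = Q0"
    unfolding \<nu>0_def \<nu>1_def by (rule moment_measure_eqD[OF b_pos Q0_sets Q1_sets, symmetric])
qed

end
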